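(* Let $p$ be a prime, $q=p^2$, for $a\in\mathbb{F}_q$ write $\bar a = a^p$, $N(a)=a^{p+1}$, let $Q = \{(a,b) \in \mathbb{F}_q^2 : N(a)+N(b)=1\}$ and for $x=(a,b)\in Q$ let $\ell_x = \{(a+t\bar b,\ b-t\bar a): t\in\mathbb{F}_q\}$. Define $$S' = \{(x,y) \in \mathbb{F}_q^2 \times \mathbb{F}_q^2 : x \in Q,\ y \in \ell_x\}.$$ Then $|S'| = q\,|Q|$, and $S'$ contains no three points of the form $(x,y),(x,y+d),(x+d,y')$ with $x,y,y' \in \mathbb{F}_q^2$ and $d \in \mathbb{F}_q^2\setminus\{0\}$. *)

theory Defs
  imports Main "HOL-Computational_Algebra.Primes" "HOL-Library.Product_Plus"
begin

definition fconj :: "nat \<Rightarrow> 'a::field \<Rightarrow> 'a" where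
  "fconj p a = a ^ p"

definition fnorm :: "nat \<Rightarrow> 'a::field \<Rightarrow> 'a" where
  "fnorm p a = a ^ (p + 1)"

definition Qset :: "nat \<Rightarrow> ('a::field \<times> 'a) set" where
  "Qset p = {(a, b). fnorm p a + fnorm p b = 1}"

definition ell :: "nat \<Rightarrow> ('a::field \<times> 'a) \<Rightarrow> ('a \<times> 'a) set" where
  "ell p x = (case x of (a, b) \<Rightarrow>
      {(a + t * fconj p b, b - t * fconj p a) | t. True})"

definition Sprime :: "nat \<Rightarrow> (('a::field \<times> 'a) \<times> ('a \<times> 'a)) set" where
  "Sprime p = {(x, y). x \<in> Qset p \<and> y \<in> ell p x}"

end

theory Submission
  imports Defs "HOL-Number_Theory.Residues"
begin

text \<open>The line \<open>\<ell>\<^sub>x\<close> is \<open>x + \<bbbF>\<^sub>q (b\<^sup>p, -a\<^sup>p)\<close>, and along it the Hermitian norm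
  \<open>N(a) + N(b)\<close> gets multiplied by \<open>1 + N(t)\<close>. Since \<open>N(t) = 0\<close> only for \<open>t = 0\<close>, the line
  \<open>\<ell>\<^sub>x\<close> meets \<open>Q\<close> only in \<open>x\<close>. A corner \<open>(x,y), (x,y+d), (x+d,y')\<close> would put \<open>x + d\<close> on
  \<open>\<ell>\<^sub>x\<close> (as \<open>d\<close> is a difference of two points of \<open>\<ell>\<^sub>x\<close>) and in \<open>Q\<close>, forcing \<open>d = 0\<close>.\<close>

lemma finite_field_power_card:
  fixes x :: "'a::{field,finite}"
  shows "x ^ card (UNIV :: 'a set) = x"
proof (cases "x = 0")
  case True
  then show ?thesis by (simp add: finite_UNIV_card_ge_0)
next
  case False
  let ?U = "UNIV - {0 :: 'a}"
  have "bij_betw ((*) x) ?U ?U"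
    by (rule bij_betwI[where g = "\<lambda>y. y / x"]) (use False in auto)
  then have "(\<Prod>y\<in>?U. x * y) = \<Prod>?U"
    by (rule prod.reindex_bij_betw)
  then have "x ^ card ?U * \<Prod>?U = 1 * \<Prod>?U"
    by (simp add: prod.distrib)
  then have "x ^ card ?U = 1"
    by (subst (asm) mult_cancel_right) auto
  moreover have "card (UNIV :: 'a set) = Suc (card ?U)"
    using finite_UNIV_card_ge_0[where 'a = 'a] by (simp add: card_Diff_singleton)
  ultimately show ?thesis
    by (simp only: power_Suc mult_1_right)
qed

lemma CHAR_eq_prime_of_card_prime_power:
  assumes "prime p" and "n > 0" and "card (UNIV :: 'a::{field,finite} set) = p ^ n"
  shows "CHAR('a) = p"
proof -
  have "prime CHAR('a)"
    by (simp add: finite_imp_CHAR_pos prime_CHAR_semidom)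
  moreover have "CHAR('a) dvd p ^ n"
    using CHAR_dvd_CARD[where 'a = 'a] assms(3) by simp
  ultimately show ?thesis
    using assms(1,2) prime_dvd_power primes_dvd_imp_eq by blast
qed

lemma fconj_mult: "fconj p (u * v) = fconj p u * fconj p v"
  by (simp add: fconj_def power_mult_distrib)

lemma fconj_add:
  assumes "prime p" and "CHAR('a::field) = p"
  shows "fconj p (u + v :: 'a) = fconj p u + fconj p v"
  unfolding fconj_def by (rule freshmans_dream) (use assms in auto)

lemma fconj_diff:
  assumes "prime p" and "CHAR('a::field) = p"
  shows "fconj p (u - v :: 'a) = fconj p u - fconj p v"
  using fconj_add[OF assms, of u "- v"] minus_power_prime_CHAR[OF assms(2)[symmetric] assms(1)]
  by (simp add: fconj_def)

lemma fconj_fconj: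
  assumes "card (UNIV :: 'a::{field,finite} set) = p ^ 2"
  shows "fconj p (fconj p u :: 'a) = u"
proof -
  have "fconj p (fconj p u) = u ^ (p ^ 2)"
    by (simp add: fconj_def power2_eq_square power_mult)
  also have "\<dots> = u"
    using finite_field_power_card[of u] by (simp only: assms)
  finally show ?thesis .
qed

lemma fnorm_eq_fconj_mult: "fnorm p a = fconj p a * a"
  by (simp add: fnorm_def fconj_def)

lemma fnorm_eq_0_iff: "fnorm p a = 0 \<longleftrightarrow> a = 0"
  by (auto simp: fnorm_def)

lemma fnorm_along_ell:
  assumes "prime p" and "card (UNIV :: 'a::{field,finite} set) = p ^ 2"
  shows "fnorm p (a + t * fconj p b) + fnorm p (b - t * fconj p a)
           = (fnorm p a + fnorm p b) * (1 + fnorm p (t :: 'a))"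
proof -
  have char: "CHAR('a) = p"
    using CHAR_eq_prime_of_card_prime_power[OF assms(1) _ assms(2)] by simp
  have conj_a: "fconj p (a + t * fconj p b) = fconj p a + fconj p t * b"
    by (simp add: fconj_add[OF assms(1) char] fconj_mult fconj_fconj[OF assms(2)])
  have conj_b: "fconj p (b - t * fconj p a) = fconj p b - fconj p t * a"
    by (simp add: fconj_diff[OF assms(1) char] fconj_mult fconj_fconj[OF assms(2)])
  have "fnorm p (a + t * fconj p b) + fnorm p (b - t * fconj p a)
      = (fconj p a + fconj p t * b) * (a + t * fconj p b)
        + (fconj p b - fconj p t * a) * (b - t * fconj p a)"
    unfolding fnorm_eq_fconj_mult conj_a conj_b ..
  also have "\<dots> = (fconj p a * a + fconj p b * b) * (1 + fconj p t * t)"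
    by (simp add: algebra_simps)
  finally show ?thesis
    unfolding fnorm_eq_fconj_mult .
qed

lemma ell_eq_range: "ell p (a, b) = range (\<lambda>t. (a + t * fconj p b, b - t * fconj p a))"
  by (auto simp: ell_def)

lemma self_mem_ell: "x \<in> ell p x"
proof -
  obtain a b where x: "x = (a, b)" by fastforce
  have "(a, b) = (\<lambda>t. (a + t * fconj p b, b - t * fconj p a)) 0"
    by simp
  then show ?thesis
    unfolding x ell_eq_range by (rule range_eqI)
qed

lemma ell_add_chord:
  assumes "y \<in> ell p x" and "y + d \<in> ell p x"
  shows "x + d \<in> ell p x"
proof -
  obtain a b where x: "x = (a, b)" by fastforce
  obtain s t where "y = (a + s * fconj p b, b - s * fconj p a)"
    and "y + d = (a + t * fconj p b, b - t * fconj p a)"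
    using assms unfolding x ell_eq_range by blast
  then have "x + d = (a + (t - s) * fconj p b, b - (t - s) * fconj p a)"
    unfolding x by (cases d) (auto simp: algebra_simps)
  then show ?thesis
    unfolding x ell_eq_range by blast
qed

lemma Qset_nonzero:
  assumes "x \<in> Qset p"
  shows "x \<noteq> 0"
  using assms by (auto simp: Qset_def fnorm_def zero_prod_def)

lemma card_ell:
  assumes "x \<noteq> 0"
  shows "card (ell p (x :: 'a::field \<times> 'a)) = card (UNIV :: 'a set)"
proof -
  obtain a b where x: "x = (a, b)" by fastforce
  have "inj (\<lambda>t. (a + t * fconj p b, b - t * fconj p a))"
  proof (rule injI)
    fix s t :: 'a
    assume "(a + s * fconj p b, b - s * fconj p a) = (a + t * fconj p b, b - t * fconj p a)"
    then have "(s - t) * fconj p b = 0" and "(s - t) * fconj p a = 0"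
      by (auto simp: algebra_simps)
    then show "s = t"
      using assms unfolding x fconj_def zero_prod_def by auto
  qed
  then show ?thesis
    unfolding x ell_eq_range by (simp add: card_image)
qed

lemma Sprime_eq_Sigma: "Sprime p = (SIGMA x:Qset p. ell p x)"
  by (auto simp: Sprime_def)

lemma card_Sprime:
  "card (Sprime p :: (('a::{field,finite} \<times> 'a) \<times> ('a \<times> 'a)) set)
     = card (UNIV :: 'a set) * card (Qset p :: ('a \<times> 'a) set)"
  unfolding Sprime_eq_Sigma by (subst card_SigmaI) (auto simp: card_ell Qset_nonzero)

lemma ell_inter_Qset:
  assumes "prime p" and "card (UNIV :: 'a::{field,finite} set) = p ^ 2" and "x \<in> Qset p"
  shows "ell p x \<inter> Qset p = {x :: 'a \<times> 'a}"
proof (intro equalityI subsetI)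
  fix z
  assume z: "z \<in> ell p x \<inter> Qset p"
  obtain a b where x: "x = (a, b)" by fastforce
  obtain t where z_eq: "z = (a + t * fconj p b, b - t * fconj p a)"
    using z unfolding x ell_eq_range by blast
  have "fnorm p (a + t * fconj p b) + fnorm p (b - t * fconj p a) = 1"
    using z by (simp add: z_eq Qset_def)
  moreover have "fnorm p a + fnorm p b = 1"
    using assms(3) by (simp add: x Qset_def)
  ultimately have "1 + fnorm p t = 1"
    using fnorm_along_ell[OF assms(1,2), of a t b] by simp
  then have "t = 0"
    by (simp add: fnorm_eq_0_iff)
  then show "z \<in> {x}"
    by (simp add: z_eq x)
next
  show "z \<in> ell p x \<inter> Qset p" if "z \<in> {x}" for z
    using that assms(3) self_mem_ell by blast
qed

theorem mainTheorem4:
  fixes p :: nat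
  assumes "prime p"
    and "card (UNIV :: 'a::{field,finite} set) = p ^ 2"
  shows "card (Sprime p :: (('a \<times> 'a) \<times> ('a \<times> 'a)) set)
           = card (UNIV :: 'a set) * card (Qset p :: ('a \<times> 'a) set)
         \<and> \<not> (\<exists>x y y' d. d \<noteq> (0 :: 'a \<times> 'a)
               \<and> (x, y) \<in> Sprime p \<and> (x, y + d) \<in> Sprime p
               \<and> (x + d, y') \<in> Sprime p)"
proof (intro conjI notI card_Sprime)
  assume "\<exists>x y y' d. d \<noteq> (0 :: 'a \<times> 'a)
               \<and> (x, y) \<in> Sprime p \<and> (x, y + d) \<in> Sprime p
               \<and> (x + d, y') \<in> Sprime p"
  then obtain x y y' d :: "'a \<times> 'a" where "d \<noteq> 0" and "(x, y) \<in> Sprime p"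
    and "(x, y + d) \<in> Sprime p" and "(x + d, y') \<in> Sprime p"
    by blast
  then have "x \<in> Qset p" and "y \<in> ell p x" and "y + d \<in> ell p x" and "x + d \<in> Qset p"
    by (simp_all add: Sprime_def)
  then have "x + d \<in> ell p x \<inter> Qset p"
    using ell_add_chord by blast
  then have "x + d = x"
    using ell_inter_Qset[OF assms \<open>x \<in> Qset p\<close>] by blast
  with \<open>d \<noteq> 0\<close> show False
    by simp
qed

end
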